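(* Let $\mathcal{C}\subseteq\mathbb{F}_3^{11}$ be the ternary Golay code, with length $n=11$, dimension $k=6$ and minimum distance $d=5$. Then $$\mathbb{E}[\mathcal{C}] = n(H_n-H_{d-1}) - \frac{\binom{n}{k} - \frac{W_k(\mathcal{C}^\perp)}{2}}{\binom{n-1}{k}} \approx 8.416,$$ where $W_6(\mathcal{C}^\perp)=132$.
   Context: The ternary Golay code is a linear $[11,6,5]$ code over $\mathbb{F}_3$ (unique up to equivalence); its homogeneous weight enumerator is $X^{11}+132X^6Y^5+132X^5Y^6+330X^3Y^8+110X^2Y^9+24Y^{11}$. $\mathcal{C}^\perp$ is its dual code (standard inner product) and $W_i(\mathcal{D})$ denotes the number of codewords of Hamming weight $i$ in a code $\mathcal{D}$. $H_m=\sum_{i=1}^m 1/i$. $\mathbb{E}[\mathcal{C}]$ is $\mathbb{E}[G]$ for any generator matrix $G\in\mathbb{F}_3^{6\times 11}$, the expected number of draws when columns of $G$ are drawn independently and uniformly at random from its $11$ columns (with repetition) until the drawn columns span $\mathbb{F}_3^6$. *)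

theory Defs
  imports "HOL-Analysis.Analysis" "HOL-Library.Numeral_Type"
begin

text \<open>F_3 is the numeral type 3 (integers mod 3, a ring of characteristic 3,
 i.e. the field with three elements). Vectors in F_3^n are elements of 3^n.\<close>

definition hweight :: "'a::zero ^ 'n \<Rightarrow> nat" where
  "hweight x = card {i. x $ i \<noteq> 0}"

definition hdist :: "'a ^ 'n \<Rightarrow> 'a ^ 'n \<Rightarrow> nat" where
  "hdist x y = card {i. x $ i \<noteq> y $ i}"

definition linear_code :: "('a::comm_ring_1 ^ 'n) set \<Rightarrow> bool" where
  "linear_code C \<longleftrightarrow> 0 \<in> C \<and> (\<forall>x\<in>C. \<forall>y\<in>C. x + y \<in> C) \<and> (\<forall>a x. x \<in> C \<longrightarrow> a *s x \<in> C)"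

definition min_dist :: "('a ^ 'n) set \<Rightarrow> nat" where
  "min_dist C = Min {hdist x y | x y. x \<in> C \<and> y \<in> C \<and> x \<noteq> y}"

definition dotp :: "'a::comm_ring_1 ^ 'n \<Rightarrow> 'a ^ 'n \<Rightarrow> 'a" where
  "dotp x y = (\<Sum>i\<in>UNIV. x $ i * y $ i)"

definition dual_code :: "('a::comm_ring_1 ^ 'n) set \<Rightarrow> ('a ^ 'n) set" where
  "dual_code C = {y. \<forall>x\<in>C. dotp x y = 0}"

definition W :: "nat \<Rightarrow> ('a::zero ^ 'n) set \<Rightarrow> nat" where
  "W i D = card {x \<in> D. hweight x = i}"

definition generator_matrix :: "'a::comm_ring_1 ^ 'n ^ 'k \<Rightarrow> ('a ^ 'n) set \<Rightarrow> bool" where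
  "generator_matrix G C \<longleftrightarrow>
     C = {(\<Sum>r\<in>UNIV. c $ r *s G $ r) | c. True} \<and>
     (\<forall>c. (\<Sum>r\<in>UNIV. c $ r *s G $ r) = 0 \<longrightarrow> c = 0)"

definition column :: "'a ^ 'n ^ 'k \<Rightarrow> 'n \<Rightarrow> 'a ^ 'k" where
  "column G j = (\<chi> r. G $ r $ j)"

definition cols_span :: "'a::comm_ring_1 ^ 'n ^ 'k \<Rightarrow> 'n list \<Rightarrow> bool" where
  "cols_span G xs \<longleftrightarrow>
     (\<forall>v. \<exists>c :: nat \<Rightarrow> 'a. v = (\<Sum>i<length xs. c i *s column G (xs ! i)))"

text \<open>Probability that the number T of draws (uniform i.i.d. column indices) equals t:
 the first t draws span, the first t-1 do not.\<close>
definition prob_T :: "'a::comm_ring_1 ^ 'n::finite ^ 'k \<Rightarrow> nat \<Rightarrow> real" where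
  "prob_T G t = real (card {xs :: 'n list. length xs = t \<and> cols_span G xs \<and> \<not> cols_span G (butlast xs)})
                / real (CARD('n)) ^ t"

definition expected_draws :: "'a::comm_ring_1 ^ 'n::finite ^ 'k \<Rightarrow> real" where
  "expected_draws G = (\<Sum>t. real t * prob_T G t)"

end

theory Submission
  imports Defs
begin

(* Summation by parts turns E[T] into the sum over t of P(T > t). Grouping the words of t
   draws by the set S of columns they use, each set S of columns that does not span
   contributes 1 / ((n - 1) choose |S|) in total (a geometric-type recursion in |S|).
   A set of columns spans iff no nonzero codeword vanishes on it, so for the ternary
   [11,6,5] code the non-spanning sets are all sets of size at most 5 together with the
   complements of the 66 supports of weight-5 codewords. That count comes from perfectness
   (729 * 243 = 3^11): every weight-3 vector lies within distance 2 of exactly one codeword,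
   which has weight 5. The same complements are the supports of the weight-6 dual codewords,
   which gives W_6(C^perp) = 2 * 66. *)

section \<open>The field with three elements, dot products and linear codes\<close>

lemma F3_cases: "(x :: 3) = 0 \<or> x = 1 \<or> x = -1"
proof (cases x)
  case (of_int z)
  then have "z = 0 \<or> z = 1 \<or> z = 2" by auto
  then show ?thesis using of_int by auto
qed

lemma F3_square_eq_1: "(a :: 3) \<noteq> 0 \<Longrightarrow> a * a = 1"
  using F3_cases[of a] by auto

lemma F3_mult_eq_0_iff: "(a :: 3) * b = 0 \<longleftrightarrow> a = 0 \<or> b = 0"
  using F3_cases[of a] F3_cases[of b] by auto

lemma F3_eq_neg_iff: "(a :: 3) = - a \<longleftrightarrow> a = 0"
  using F3_cases[of a] by auto

lemma F3_nonzero_eq_or_eq_neg: "(x :: 3) \<noteq> 0 \<Longrightarrow> y \<noteq> 0 \<Longrightarrow> x = y \<or> x = - y"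
  using F3_cases[of x] F3_cases[of y] by auto

lemma dotp_commute: "dotp x y = dotp y x"
  unfolding dotp_def by (simp add: mult.commute)

lemma dotp_add_right: "dotp u (x + y) = dotp u x + dotp u y"
  unfolding dotp_def by (simp add: distrib_left sum.distrib)

lemma dotp_smult_right: "dotp u (a *s x) = a * dotp u x"
  unfolding dotp_def by (simp add: sum_distrib_left algebra_simps)

lemma dotp_zero_left [simp]: "dotp 0 u = 0"
  unfolding dotp_def by simp

lemma dotp_zero_right [simp]: "dotp u 0 = 0"
  unfolding dotp_def by simp

lemma dotp_axis_right: "dotp u (axis i 1) = u $ i"
  unfolding dotp_def axis_def by (simp add: if_distrib cong: if_cong)

lemma linear_code_add_smult: "linear_code V \<Longrightarrow> x \<in> V \<Longrightarrow> y \<in> V \<Longrightarrow> x + a *s y \<in> V"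
  unfolding linear_code_def by blast

lemma linear_code_UNIV: "linear_code UNIV"
  unfolding linear_code_def by simp

text \<open>The level sets of a nonzero linear functional on a ternary code are translates of its kernel.\<close>
lemma card_linear_code_eq_3_card_kernel:
  fixes V :: "(3 ^ 'k) set"
  assumes V: "linear_code V" and "w0 \<in> V" and "dotp u w0 \<noteq> 0"
  shows "card V = 3 * card {w\<in>V. dotp u w = 0}"
proof -
  define K where "K = {w\<in>V. dotp u w = 0}"
  define w1 where "w1 = dotp u w0 *s w0"
  have "w1 \<in> V" using V \<open>w0 \<in> V\<close> by (simp add: w1_def linear_code_def)
  have u_w1: "dotp u w1 = 1" using F3_square_eq_1[OF assms(3)] by (simp add: w1_def dotp_smult_right)
  define level where "level a = (\<lambda>z. z + a *s w1) ` K" for a :: 3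
  have "V = (\<Union>a. level a)"
  proof (intro equalityI subsetI)
    fix w assume "w \<in> V"
    then have "w + (- dotp u w) *s w1 \<in> K"
      using linear_code_add_smult[OF V _ \<open>w1 \<in> V\<close>] u_w1
      by (simp add: K_def dotp_add_right dotp_smult_right)
    moreover have "w = (w + (- dotp u w) *s w1) + dotp u w *s w1"
      by (simp add: vec_eq_iff algebra_simps)
    ultimately show "w \<in> (\<Union>a. level a)" unfolding level_def by blast
  qed (use linear_code_add_smult[OF V _ \<open>w1 \<in> V\<close>] in \<open>auto simp: level_def K_def\<close>)
  moreover have level_dotp: "dotp u x = a" if "x \<in> level a" for x a
    using that u_w1 by (auto simp: level_def K_def dotp_add_right dotp_smult_right)
  then have "disjoint_family level" by (fastforce simp: disjoint_family_on_def dest: level_dotp)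
  ultimately have "card V = (\<Sum>a\<in>(UNIV :: 3 set). card (level a))"
    by (simp add: card_UN_disjoint disjoint_family_on_def)
  moreover have "card (level a) = card K" for a
    unfolding level_def by (rule card_image) (simp add: inj_on_def)
  ultimately show ?thesis by (simp add: K_def)
qed

lemma sum_if_eq_zero:
  "finite A \<Longrightarrow> 0 \<in> A \<Longrightarrow> (\<Sum>x\<in>A. if x = 0 then a else b) = a + of_nat (card A - 1) * b"
  by (simp add: sum.remove[of A 0] card_Diff_singleton)

text \<open>Double counting of the orthogonal pairs in \<open>UNIV \<times> V\<close> shows \<open>card V = CARD(3 ^ 'k)\<close>.\<close>
lemma linear_code_eq_UNIV_if_orthogonal_trivial:
  fixes V :: "(3 ^ 'k) set"
  assumes V: "linear_code V" and orth: "\<And>u. (\<forall>w\<in>V. dotp u w = 0) \<Longrightarrow> u = 0"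
  shows "V = UNIV"
proof -
  define M where "M = card V"
  define N where "N = CARD(3 ^ 'k)"
  have "0 \<in> V" using V by (simp add: linear_code_def)
  then have "M \<ge> 1" by (auto simp: M_def Suc_le_eq card_gt_0_iff)
  have "card {w\<in>V. dotp u w = 0} * 3 = (if u = 0 then 3 * M else M)" for u
  proof (cases "u = 0")
    case False
    then obtain w0 where "w0 \<in> V" "dotp u w0 \<noteq> 0" using orth by blast
    then show ?thesis using card_linear_code_eq_3_card_kernel[OF V] False by (simp add: M_def)
  qed (simp add: M_def)
  then have "(\<Sum>u\<in>UNIV. card {w\<in>V. dotp u w = 0}) * 3 = 3 * M + (N - 1) * M"
    by (simp add: sum_distrib_right sum_if_eq_zero N_def)
  moreover have "card {u. dotp u w = 0} * 3 = (if w = 0 then 3 * N else N)" for w :: "3 ^ 'k"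
  proof (cases "w = 0")
    case False
    then obtain i where "w $ i \<noteq> 0" by (auto simp: vec_eq_iff)
    then show ?thesis
      using card_linear_code_eq_3_card_kernel[OF linear_code_UNIV, of "axis i 1" w] False
      by (simp add: N_def dotp_axis_right dotp_commute)
  qed (simp add: N_def)
  then have "(\<Sum>w\<in>V. card {u. dotp u w = 0}) * 3 = 3 * N + (M - 1) * N"
    using \<open>0 \<in> V\<close> by (simp add: sum_distrib_right sum_if_eq_zero M_def)
  moreover have "(\<Sum>u\<in>UNIV. card {w\<in>V. dotp u w = 0}) = (\<Sum>w\<in>V. card {u. dotp u w = 0})"
    using sum.swap_restrict[of UNIV V "\<lambda>_ _. 1 :: nat" "\<lambda>u w. dotp u w = 0"] by simp
  ultimately have "3 * M + (N - 1) * M = 3 * N + (M - 1) * N" by simp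
  then have "M = N" using \<open>M \<ge> 1\<close> by (cases N) (simp_all add: algebra_simps)
  then show ?thesis by (simp add: M_def N_def card_subset_eq)
qed

lemma linear_code_dual: "linear_code (dual_code C)"
  unfolding linear_code_def dual_code_def by (simp add: dotp_add_right dotp_smult_right)

section \<open>Spanning sets of columns and dual codes\<close>

definition supp :: "'a::zero ^ 'n \<Rightarrow> 'n set" where
  "supp x = {i. x $ i \<noteq> 0}"

lemma supp_add_subset: "supp (x + y) \<subseteq> supp x \<union> supp (y :: 'a::monoid_add ^ 'n)"
  by (auto simp: supp_def)

lemma supp_diff_subset: "supp (x - y) \<subseteq> supp x \<union> supp (y :: 'a::ab_group_add ^ 'n)"
  by (auto simp: supp_def)

lemma supp_smult_subset: "supp (a *s x) \<subseteq> supp (x :: 'a::mult_zero ^ 'n)"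
  by (auto simp: supp_def)

lemma supp_axis_subset: "supp (axis j 1 :: 'a::zero_neq_one ^ 'n) \<subseteq> {j}"
  by (auto simp: supp_def axis_def)

definition cols_span_set :: "'a::comm_ring_1 ^ 'n ^ 'k \<Rightarrow> 'n set \<Rightarrow> bool" where
  "cols_span_set G S \<longleftrightarrow> (\<forall>v. \<exists>x. supp x \<subseteq> S \<and> G *v x = v)"

lemma card_supp_subset:
  fixes S :: "'n::finite set"
  shows "card {x :: 'a::{zero,finite} ^ 'n. supp x \<subseteq> S} = CARD('a) ^ card S"
proof -
  have "bij_betw (\<lambda>x. restrict (vec_nth x) S) {x :: 'a ^ 'n. supp x \<subseteq> S} (S \<rightarrow>\<^sub>E UNIV)"
  proof (rule bij_betw_byWitness[where f' = "\<lambda>a. \<chi> j. if j \<in> S then a j else 0"])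
  qed (auto simp: supp_def vec_eq_iff PiE_def extensional_def split: if_splits)
  then show ?thesis by (simp add: bij_betw_same_card card_PiE)
qed

lemma matrix_vector_mult_supp:
  fixes G :: "'a::comm_semiring_1 ^ 'n ^ 'k"
  assumes "supp x \<subseteq> S"
  shows "G *v x = (\<Sum>j\<in>S. x $ j *s column G j)"
proof -
  have "x $ j = 0" if "j \<notin> S" for j
    using assms that by (auto simp: supp_def)
  then have "(\<Sum>j\<in>UNIV. G $ r $ j * x $ j) = (\<Sum>j\<in>S. G $ r $ j * x $ j)" for r
    by (intro sum.mono_neutral_right) auto
  then show ?thesis
    by (simp add: vec_eq_iff matrix_vector_mult_def column_def sum_component mult.commute[of "x $ _"])
qed

lemma sum_nth_eq_sum_set:
  "(\<Sum>i<length xs. c i *s f (xs ! i)) =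
     (\<Sum>j\<in>set xs. (\<Sum>i\<in>{i\<in>{..<length xs}. xs ! i = j}. c i) *s (f j :: 'a::comm_ring_1 ^ 'k))"
proof -
  have "(\<Sum>i<length xs. c i *s f (xs ! i)) =
        (\<Sum>j\<in>set xs. \<Sum>i\<in>{i\<in>{..<length xs}. xs ! i = j}. c i *s f (xs ! i))"
    by (rule sum.group[symmetric]) auto
  also have "\<dots> = (\<Sum>j\<in>set xs. (\<Sum>i\<in>{i\<in>{..<length xs}. xs ! i = j}. c i) *s f j)"
    by (simp add: vec_eq_iff sum_component sum_distrib_right)
  finally show ?thesis .
qed

text \<open>Put all of \<open>a j\<close> on the first occurrence of \<open>j\<close> in \<open>xs\<close>.\<close>
lemma exists_index_weights:
  "\<exists>c. \<forall>j\<in>set xs. (\<Sum>i\<in>{i\<in>{..<length xs}. xs ! i = j}. c i) = (a j :: 'a::comm_monoid_add)"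
proof
  define first where "first j = (LEAST i. xs ! i = j)" for j
  show "\<forall>j\<in>set xs. (\<Sum>i\<in>{i\<in>{..<length xs}. xs ! i = j}. if i = first (xs ! i) then a (xs ! i) else 0) = a j"
  proof
    fix j assume "j \<in> set xs"
    then obtain k where k: "k < length xs" "xs ! k = j" by (auto simp: in_set_conv_nth)
    then have "xs ! first j = j" "first j \<le> k"
      unfolding first_def by (auto intro: LeastI Least_le)
    then have "first j \<in> {i\<in>{..<length xs}. xs ! i = j}" using k by simp
    moreover have "(\<Sum>i\<in>{i\<in>{..<length xs}. xs ! i = j}. if i = first (xs ! i) then a (xs ! i) else 0) =
        (\<Sum>i\<in>{i\<in>{..<length xs}. xs ! i = j}. if i = first j then a j else 0)"
      by (rule sum.cong) auto
    ultimately show "(\<Sum>i\<in>{i\<in>{..<length xs}. xs ! i = j}. if i = first (xs ! i) then a (xs ! i) else 0) = a j"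
      by simp
  qed
qed

lemma combination_nth_iff_set:
  fixes f :: "'n \<Rightarrow> 'a::comm_ring_1 ^ 'k"
  shows "(\<exists>c. v = (\<Sum>i<length xs. c i *s f (xs ! i))) \<longleftrightarrow> (\<exists>a. v = (\<Sum>j\<in>set xs. a j *s f j))"
proof
  assume "\<exists>a. v = (\<Sum>j\<in>set xs. a j *s f j)"
  then obtain a where v: "v = (\<Sum>j\<in>set xs. a j *s f j)" ..
  obtain c where "\<forall>j\<in>set xs. (\<Sum>i\<in>{i\<in>{..<length xs}. xs ! i = j}. c i) = a j"
    using exists_index_weights[where xs = xs and a = a] by blast
  then have "v = (\<Sum>i<length xs. c i *s f (xs ! i))" unfolding sum_nth_eq_sum_set[where f = f] v by simp
  then show "\<exists>c. v = (\<Sum>i<length xs. c i *s f (xs ! i))" by blast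
next
  assume "\<exists>c. v = (\<Sum>i<length xs. c i *s f (xs ! i))"
  then obtain c where "v = (\<Sum>i<length xs. c i *s f (xs ! i))" ..
  then show "\<exists>a. v = (\<Sum>j\<in>set xs. a j *s f j)"
    unfolding sum_nth_eq_sum_set[where f = f]
    by (intro exI[where x = "\<lambda>j. \<Sum>i\<in>{i\<in>{..<length xs}. xs ! i = j}. c i"])
qed

lemma matrix_vector_mult_smult: "(A :: 'a::comm_semiring_1 ^ 'n ^ 'm) *v (c *s x) = c *s (A *v x)"
  by (simp add: matrix_vector_mult_def vec_eq_iff sum_distrib_left mult_ac)

lemma dotp_vector_matrix_mult: "dotp (u v* (A :: 'a::comm_ring_1 ^ 'n ^ 'm)) x = dotp u (A *v x)"
  unfolding dotp_def vector_matrix_mult_def matrix_vector_mult_def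
  by (simp add: sum_distrib_left sum_distrib_right mult_ac sum.swap[of _ "UNIV :: 'n set"])

lemma cols_span_iff_set:
  fixes G :: "'a::comm_ring_1 ^ 'n ^ 'k"
  shows "cols_span G xs \<longleftrightarrow> cols_span_set G (set xs)"
proof -
  have "(\<exists>a. v = (\<Sum>j\<in>set xs. a j *s column G j)) \<longleftrightarrow> (\<exists>x. supp x \<subseteq> set xs \<and> G *v x = v)" for v
  proof
    assume "\<exists>a. v = (\<Sum>j\<in>set xs. a j *s column G j)"
    then obtain a where v: "v = (\<Sum>j\<in>set xs. a j *s column G j)" ..
    define x where "x = (\<chi> j. if j \<in> set xs then a j else 0)"
    have supp: "supp x \<subseteq> set xs" by (auto simp: supp_def x_def)
    moreover have "G *v x = v"
      unfolding matrix_vector_mult_supp[OF supp] v by (simp add: x_def)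
    ultimately show "\<exists>x. supp x \<subseteq> set xs \<and> G *v x = v" by blast
  qed (auto simp: matrix_vector_mult_supp)
  then show ?thesis
    unfolding cols_span_def cols_span_set_def combination_nth_iff_set by blast
qed

lemma cols_span_set_iff_image:
  "cols_span_set G S \<longleftrightarrow> (\<lambda>x. G *v x) ` {x. supp x \<subseteq> S} = UNIV"
  unfolding cols_span_set_def by (auto simp: set_eq_iff image_iff eq_commute)

lemma CARD_ge_2: "CARD('a::{zero_neq_one,finite}) \<ge> 2"
  using card_mono[of UNIV "{0, 1 :: 'a}"] by simp

lemma cols_span_set_card_ge:
  fixes G :: "'a::{comm_ring_1,finite} ^ 'n ^ 'k"
  assumes "cols_span_set G S"
  shows "CARD('k) \<le> card S"
proof -
  have "UNIV = (\<lambda>x. G *v x) ` {x. supp x \<subseteq> S}"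
    using assms by (simp add: cols_span_set_iff_image)
  then have "CARD('a) ^ CARD('k) \<le> CARD('a) ^ card S"
    using card_image_le[of "{x. supp x \<subseteq> S}" "\<lambda>x. G *v x"] by (simp add: card_supp_subset)
  then show ?thesis using CARD_ge_2[where 'a = 'a] by simp
qed

lemma cols_span_set_iff_kernel_trivial:
  fixes G :: "'a::{comm_ring_1,finite} ^ 'n ^ 'k"
  assumes "card S = CARD('k)"
  shows "cols_span_set G S \<longleftrightarrow> (\<forall>x. supp x \<subseteq> S \<and> G *v x = 0 \<longrightarrow> x = 0)"
proof -
  define D where "D = {x :: 'a ^ 'n. supp x \<subseteq> S}"
  have "card D = card (UNIV :: ('a ^ 'k) set)"
    by (simp add: D_def card_supp_subset assms)
  then have "(\<lambda>x. G *v x) ` D = UNIV \<longleftrightarrow> inj_on (\<lambda>x. G *v x) D"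
    using card_image[of "\<lambda>x. G *v x" D] eq_card_imp_inj_on[of D "\<lambda>x. G *v x"]
      card_subset_eq[of UNIV "(\<lambda>x. G *v x) ` D"] by auto
  moreover have "inj_on (\<lambda>x. G *v x) D \<longleftrightarrow> (\<forall>x. supp x \<subseteq> S \<and> G *v x = 0 \<longrightarrow> x = 0)"
  proof
    assume inj: "inj_on (\<lambda>x. G *v x) D"
    show "\<forall>x. supp x \<subseteq> S \<and> G *v x = 0 \<longrightarrow> x = 0"
      using inj_onD[OF inj, of _ 0] by (simp add: D_def supp_def)
  next
    assume kernel: "\<forall>x. supp x \<subseteq> S \<and> G *v x = 0 \<longrightarrow> x = 0"
    show "inj_on (\<lambda>x. G *v x) D"
    proof (rule inj_onI)
      fix x y assume "x \<in> D" "y \<in> D" "G *v x = G *v y"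
      then have "supp (x - y) \<subseteq> S \<and> G *v (x - y) = 0"
        using supp_diff_subset[of x y] by (auto simp: D_def matrix_vector_mult_diff_distrib)
      then have "x - y = 0" using kernel by blast
      then show "x = y" by simp
    qed
  qed
  ultimately show ?thesis by (simp add: cols_span_set_iff_image D_def)
qed

lemma sum_rows_eq_vector_matrix_mult: "(\<Sum>r\<in>UNIV. c $ r *s G $ r) = c v* G"
  by (simp add: vec_eq_iff vector_matrix_mult_def sum_component)

lemma generator_matrix_codewords:
  fixes G :: "'a::comm_ring_1 ^ 'n ^ 'k"
  assumes "generator_matrix G C"
  shows "C = range (\<lambda>u. u v* G)" and "inj (\<lambda>u. u v* G)"
proof -
  show "C = range (\<lambda>u. u v* G)"
    using assms by (auto simp: generator_matrix_def sum_rows_eq_vector_matrix_mult)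
  show "inj (\<lambda>u. u v* G)"
  proof (rule injI)
    fix u u' :: "'a ^ 'k" assume "u v* G = u' v* G"
    then have "(u - u') v* G = 0" by (simp add: vector_matrix_mult_diff_distrib)
    then have "u - u' = 0"
      using assms unfolding generator_matrix_def sum_rows_eq_vector_matrix_mult by blast
    then show "u = u'" by simp
  qed
qed

lemma linear_code_matrix_image: "linear_code ((\<lambda>x. G *v x) ` {x. supp x \<subseteq> S})"
  unfolding linear_code_def
proof (intro conjI ballI allI impI)
  show "0 \<in> (\<lambda>x. G *v x) ` {x. supp x \<subseteq> S}"
    by (rule image_eqI[of _ _ 0]) (auto simp: supp_def)
next
  fix v w assume "v \<in> (\<lambda>x. G *v x) ` {x. supp x \<subseteq> S}" "w \<in> (\<lambda>x. G *v x) ` {x. supp x \<subseteq> S}"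
  then obtain x y where "v = G *v x" "w = G *v y" "supp x \<subseteq> S" "supp y \<subseteq> S" by auto
  then show "v + w \<in> (\<lambda>x. G *v x) ` {x. supp x \<subseteq> S}"
    using supp_add_subset[of x y] by (intro image_eqI[of _ _ "x + y"]) (auto simp: matrix_vector_right_distrib)
next
  fix a v assume "v \<in> (\<lambda>x. G *v x) ` {x. supp x \<subseteq> S}"
  then obtain x where "v = G *v x" "supp x \<subseteq> S" by auto
  then show "a *s v \<in> (\<lambda>x. G *v x) ` {x. supp x \<subseteq> S}"
    using supp_smult_subset[of a x] by (intro image_eqI[of _ _ "a *s x"]) (auto simp: matrix_vector_mult_smult)
qed

lemma orthogonal_matrix_image_iff:
  fixes G :: "'a::comm_ring_1 ^ 'n ^ 'k"
  shows "(\<forall>w\<in>(\<lambda>x. G *v x) ` {x. supp x \<subseteq> S}. dotp u w = 0) \<longleftrightarrow> (\<forall>j\<in>S. (u v* G) $ j = 0)"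
proof
  assume "\<forall>w\<in>(\<lambda>x. G *v x) ` {x. supp x \<subseteq> S}. dotp u w = 0"
  then have "dotp (u v* G) (axis j 1) = 0" if "j \<in> S" for j
    using that supp_axis_subset[of j] unfolding dotp_vector_matrix_mult by blast
  then show "\<forall>j\<in>S. (u v* G) $ j = 0" by (simp add: dotp_axis_right)
next
  assume zero: "\<forall>j\<in>S. (u v* G) $ j = 0"
  have "dotp (u v* G) x = 0" if "supp x \<subseteq> S" for x
  proof -
    have "x $ i = 0" if "i \<notin> S" for i
      using \<open>supp x \<subseteq> S\<close> that by (auto simp: supp_def)
    then have "(u v* G) $ i * x $ i = 0" for i
      using zero by (cases "i \<in> S") auto
    then show ?thesis by (simp add: dotp_def)
  qed
  then show "\<forall>w\<in>(\<lambda>x. G *v x) ` {x. supp x \<subseteq> S}. dotp u w = 0"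
    by (auto simp: dotp_vector_matrix_mult)
qed

lemma cols_span_set_iff_orthogonal:
  fixes G :: "3 ^ 'n ^ 'k"
  shows "cols_span_set G S \<longleftrightarrow> (\<forall>u. (\<forall>j\<in>S. (u v* G) $ j = 0) \<longrightarrow> u = 0)"
proof -
  define V where "V = (\<lambda>x. G *v x) ` {x. supp x \<subseteq> S}"
  have "V = UNIV \<longleftrightarrow> (\<forall>u. (\<forall>w\<in>V. dotp u w = 0) \<longrightarrow> u = 0)"
  proof
    assume "V = UNIV"
    then show "\<forall>u. (\<forall>w\<in>V. dotp u w = 0) \<longrightarrow> u = 0"
      using dotp_axis_right by (metis UNIV_I vec_eq_iff zero_index)
  next
    assume "\<forall>u. (\<forall>w\<in>V. dotp u w = 0) \<longrightarrow> u = 0"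
    then show "V = UNIV"
      unfolding V_def by (intro linear_code_eq_UNIV_if_orthogonal_trivial linear_code_matrix_image) blast
  qed
  then show ?thesis
    unfolding cols_span_set_iff_image orthogonal_matrix_image_iff[symmetric] V_def .
qed

lemma cols_span_set_iff_codewords:
  fixes G :: "3 ^ 'n ^ 'k"
  assumes "generator_matrix G C"
  shows "cols_span_set G S \<longleftrightarrow> (\<forall>c\<in>C. supp c \<inter> S = {} \<longrightarrow> c = 0)"
proof -
  have "u v* G = 0 \<longleftrightarrow> u = 0" for u
    using injD[OF generator_matrix_codewords(2)[OF assms], of u 0] by auto
  then show ?thesis
    unfolding cols_span_set_iff_orthogonal generator_matrix_codewords(1)[OF assms]
    by (auto simp: supp_def)
qed

lemma dual_code_iff_kernel:
  fixes G :: "'a::comm_ring_1 ^ 'n ^ 'k"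
  assumes "generator_matrix G C"
  shows "y \<in> dual_code C \<longleftrightarrow> G *v y = 0"
proof -
  have "y \<in> dual_code C \<longleftrightarrow> (\<forall>u. dotp u (G *v y) = 0)"
    by (simp add: dual_code_def generator_matrix_codewords(1)[OF assms] dotp_vector_matrix_mult)
  also have "\<dots> \<longleftrightarrow> G *v y = 0"
    using dotp_axis_right dotp_commute by (metis dotp_zero_left vec_eq_iff zero_index)
  finally show ?thesis .
qed

section \<open>Hamming weights\<close>

lemma hweight_eq_card_supp: "hweight x = card (supp x)"
  unfolding hweight_def supp_def ..

lemma hdist_eq_hweight_diff: "hdist x y = hweight (x - (y :: 'a::ab_group_add ^ 'n))"
  unfolding hdist_def hweight_def by simp

lemma hdist_commute: "hdist x y = hdist y x"
  unfolding hdist_def by (metis (mono_tags) eq_commute)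

lemma hdist_zero_right: "hdist x (0 :: 'a::zero ^ 'n) = hweight x"
  unfolding hdist_def hweight_def by simp

lemma hdist_triangle: "hdist x z \<le> hdist x y + hdist y (z :: 'a ^ 'n)"
proof -
  have "hdist x z \<le> card ({i. x $ i \<noteq> y $ i} \<union> {i. y $ i \<noteq> z $ i})"
    unfolding hdist_def by (rule card_mono) auto
  also have "\<dots> \<le> hdist x y + hdist y z"
    unfolding hdist_def by (rule card_Un_le)
  finally show ?thesis .
qed

lemma card_supp_eq:
  fixes S :: "'n::finite set"
  shows "card {x :: 'a::{zero,finite} ^ 'n. supp x = S} = (CARD('a) - 1) ^ card S"
proof -
  have "bij_betw (\<lambda>x. restrict (vec_nth x) S) {x :: 'a ^ 'n. supp x = S} (S \<rightarrow>\<^sub>E UNIV - {0})"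
  proof (rule bij_betw_byWitness[where f' = "\<lambda>a. \<chi> j. if j \<in> S then a j else 0"])
  qed (auto simp: supp_def vec_eq_iff PiE_def extensional_def Pi_def split: if_splits)
  then show ?thesis by (simp add: bij_betw_same_card card_PiE card_Diff_subset)
qed

lemma card_hweight_eq:
  "card {x :: 'a::{zero,finite} ^ 'n. hweight x = w} = (CARD('n) choose w) * (CARD('a) - 1) ^ w"
proof -
  have "card {x :: 'a ^ 'n. hweight x = w} = card (\<Union>S\<in>{S. card S = w}. {x :: 'a ^ 'n. supp x = S})"
    by (rule arg_cong[where f = card]) (auto simp: hweight_eq_card_supp)
  also have "\<dots> = (\<Sum>S\<in>{S :: 'n set. card S = w}. card {x :: 'a ^ 'n. supp x = S})"
    by (rule card_UN_disjoint) auto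
  also have "\<dots> = (\<Sum>S\<in>{S :: 'n set. card S = w}. (CARD('a) - 1) ^ w)"
    by (simp add: card_supp_eq)
  also have "\<dots> = (CARD('n) choose w) * (CARD('a) - 1) ^ w"
    using n_subsets[of "UNIV :: 'n set" w] by simp
  finally show ?thesis .
qed

lemma card_hamming_ball:
  "card {x :: 'a::{ab_group_add,finite} ^ 'n. hdist x c \<le> r} =
     (\<Sum>w\<le>r. (CARD('n) choose w) * (CARD('a) - 1) ^ w)"
proof -
  have "{x. hdist x c \<le> r} = (\<lambda>x. x + c) ` (\<Union>w\<le>r. {x :: 'a ^ 'n. hweight x = w})"
    by (force simp: hdist_eq_hweight_diff image_iff)
  then have "card {x. hdist x c \<le> r} = card (\<Union>w\<le>r. {x :: 'a ^ 'n. hweight x = w})"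
    by (simp add: card_image)
  also have "\<dots> = (\<Sum>w\<le>r. card {x :: 'a ^ 'n. hweight x = w})"
    by (rule card_UN_disjoint) auto
  finally show ?thesis by (simp add: card_hweight_eq)
qed

text \<open>A vector of weight \<open>w\<close> within distance \<open>r\<close> of a vector \<open>c\<close> of weight \<open>w + r\<close> must
  differ from \<open>c\<close> on at least \<open>r\<close> positions of \<open>supp c\<close>, so it is the restriction of \<open>c\<close> to
  a \<open>w\<close>-subset of \<open>supp c\<close>.\<close>
lemma restriction_if_near:
  fixes c :: "'a::zero ^ 'n::finite"
  assumes c: "hweight c = w + r" and x: "hweight x = w" and D: "hdist x c \<le> r"
  shows "supp x \<subseteq> supp c" and "x = (\<chi> i. if i \<in> supp x then c $ i else 0)"
proof -
  have "card (supp x - supp c) + card (supp c - supp x) = card ((supp x - supp c) \<union> (supp c - supp x))"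
    by (rule card_Un_disjoint[symmetric]) auto
  also have "\<dots> \<le> hdist x c"
    unfolding hdist_def by (rule card_mono) (auto simp: supp_def)
  finally have "card (supp x - supp c) + card (supp c - supp x) \<le> r"
    using D by linarith
  moreover have "card (supp c - supp x) \<ge> r"
    using c x card_mono[of "supp x" "supp c \<inter> supp x"]
    by (simp add: hweight_eq_card_supp card_Diff_subset_Int)
  ultimately have "card (supp x - supp c) = 0" and "card (supp c - supp x) = r" by linarith+
  then show "supp x \<subseteq> supp c" by auto
  have "supp c - supp x \<subseteq> {i. x $ i \<noteq> c $ i}" by (auto simp: supp_def)
  then have "{i. x $ i \<noteq> c $ i} = supp c - supp x"
    using D \<open>card (supp c - supp x) = r\<close> unfolding hdist_def by (intro card_seteq[symmetric]) auto
  then show "x = (\<chi> i. if i \<in> supp x then c $ i else 0)"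
    by (auto simp: vec_eq_iff supp_def)
qed

lemma card_hweight_near:
  fixes c :: "'a::zero ^ 'n::finite"
  assumes c: "hweight c = w + r"
  shows "card {x. hweight x = w \<and> hdist x c \<le> r} = (w + r) choose w"
proof -
  define restr where "restr T = (\<chi> i. if i \<in> T then c $ i else 0)" for T
  have supp_restr: "supp (restr T) = T" if "T \<subseteq> supp c" for T
    using that by (auto simp: restr_def supp_def)
  have "{x. hweight x = w \<and> hdist x c \<le> r} = restr ` {T. T \<subseteq> supp c \<and> card T = w}"
  proof (intro equalityI subsetI)
    fix x assume "x \<in> {x. hweight x = w \<and> hdist x c \<le> r}"
    then show "x \<in> restr ` {T. T \<subseteq> supp c \<and> card T = w}"
      using restriction_if_near[OF c] unfolding restr_def
      by (intro image_eqI[where x = "supp x"]) (auto simp: hweight_eq_card_supp)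
  next
    fix x assume "x \<in> restr ` {T. T \<subseteq> supp c \<and> card T = w}"
    then obtain T where T: "T \<subseteq> supp c" "card T = w" and x: "x = restr T" by blast
    have "{i. x $ i \<noteq> c $ i} = supp c - T"
      using T by (auto simp: x restr_def supp_def)
    then show "x \<in> {x. hweight x = w \<and> hdist x c \<le> r}"
      using T c supp_restr[OF T(1)] by (simp add: x hweight_eq_card_supp hdist_def card_Diff_subset)
  qed
  moreover have "inj_on restr {T. T \<subseteq> supp c \<and> card T = w}"
    by (rule inj_onI) (metis mem_Collect_eq supp_restr)
  ultimately show ?thesis
    using n_subsets[of "supp c" w] c by (simp add: card_image hweight_eq_card_supp)
qed

lemma min_dist_le_hdist:
  fixes C :: "('a ^ 'n::finite) set"
  assumes "x \<in> C" "y \<in> C" "x \<noteq> y"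
  shows "min_dist C \<le> hdist x y"
proof -
  have "{hdist x y | x y. x \<in> C \<and> y \<in> C \<and> x \<noteq> y} \<subseteq> {..CARD('n)}"
    by (auto simp: hdist_def card_mono)
  then show ?thesis
    unfolding min_dist_def using assms by (intro Min_le) (auto intro: finite_subset)
qed

lemma min_dist_le_hweight:
  fixes C :: "('a::comm_ring_1 ^ 'n::finite) set"
  assumes "linear_code C" "c \<in> C" "c \<noteq> 0"
  shows "min_dist C \<le> hweight c"
  using min_dist_le_hdist[of c C 0] assms by (simp add: linear_code_def hdist_zero_right)

lemma perfect_code_covers:
  fixes C :: "('a::{ab_group_add,finite} ^ 'n) set"
  assumes "\<And>x y. x \<in> C \<Longrightarrow> y \<in> C \<Longrightarrow> x \<noteq> y \<Longrightarrow> 2 * r < hdist x y"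
    and "card C * (\<Sum>w\<le>r. (CARD('n) choose w) * (CARD('a) - 1) ^ w) = CARD('a ^ 'n)"
  shows "\<exists>c\<in>C. hdist v c \<le> r"
proof -
  have "disjoint_family_on (\<lambda>c. {x. hdist x c \<le> r}) C"
    unfolding disjoint_family_on_def
  proof (intro ballI impI, rule ccontr)
    fix c c' assume cc': "c \<in> C" "c' \<in> C" "c \<noteq> c'"
      and "{x. hdist x c \<le> r} \<inter> {x. hdist x c' \<le> r} \<noteq> {}"
    then obtain x where "hdist x c \<le> r" "hdist x c' \<le> r" by blast
    then have "hdist c c' \<le> 2 * r" using hdist_triangle[of c c' x] hdist_commute[of c x] by simp
    then show False using assms(1)[OF cc'(1-3)] by simp
  qed
  then have "card (\<Union>c\<in>C. {x. hdist x c \<le> r}) = CARD('a ^ 'n)"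
    using assms(2) by (simp add: card_UN_disjoint' card_hamming_ball)
  then have "(\<Union>c\<in>C. {x. hdist x c \<le> r}) = UNIV"
    by (intro card_subset_eq) auto
  then show ?thesis by blast
qed

lemma ternary_min_weight_same_supp:
  fixes D :: "(3 ^ 'n) set"
  assumes D: "linear_code D" and "x \<in> D" "y \<in> D" "x \<noteq> 0" "supp y = supp x"
    and min: "\<And>z. z \<in> D \<Longrightarrow> z \<noteq> 0 \<Longrightarrow> hweight x \<le> hweight z"
  shows "y = x \<or> y = - x"
proof -
  obtain j where j: "x $ j \<noteq> 0" using \<open>x \<noteq> 0\<close> by (auto simp: vec_eq_iff)
  then have "y $ j \<noteq> 0" using \<open>supp y = supp x\<close> by (auto simp: supp_def)
  define l where "l = y $ j * x $ j"
  define d where "d = y + (- l) *s x"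
  have "d \<in> D" unfolding d_def using D \<open>y \<in> D\<close> \<open>x \<in> D\<close> by (rule linear_code_add_smult)
  have "l * x $ j = y $ j"
    using F3_square_eq_1[OF j] by (simp add: l_def mult.assoc)
  then have "d $ j = 0" by (simp add: d_def)
  have "y $ i = 0" if "x $ i = 0" for i
    using \<open>supp y = supp x\<close> that by (auto simp: supp_def set_eq_iff)
  then have "d $ i = 0" if "x $ i = 0" for i
    using that by (simp add: d_def)
  then have "supp d \<subseteq> supp x" by (auto simp: supp_def)
  moreover have "j \<in> supp x - supp d" using j \<open>d $ j = 0\<close> by (simp add: supp_def)
  ultimately have "supp d \<subset> supp x" by blast
  then have "hweight d < hweight x"
    by (simp add: hweight_eq_card_supp psubset_card_mono)
  then have "d = 0" using min[OF \<open>d \<in> D\<close>] by fastforce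
  then have "y = l *s x" by (simp add: d_def vec_eq_iff)
  moreover have "l = 1 \<or> l = -1"
    using F3_cases[of l] j \<open>y $ j \<noteq> 0\<close> by (auto simp: l_def F3_mult_eq_0_iff)
  ultimately show ?thesis by (auto simp: vec_eq_iff)
qed

lemma card_ternary_min_weight:
  fixes D :: "(3 ^ 'n) set"
  assumes D: "linear_code D" and "w \<ge> 1"
    and min: "\<And>z. z \<in> D \<Longrightarrow> z \<noteq> 0 \<Longrightarrow> w \<le> hweight z"
  shows "card {x\<in>D. hweight x = w} = 2 * card (supp ` {x\<in>D. hweight x = w})"
proof -
  define A where "A = {x\<in>D. hweight x = w}"
  have fiber: "card {x\<in>A. supp x = supp x0} = 2" if "x0 \<in> A" for x0
  proof -
    have x0: "x0 \<in> D" "hweight x0 = w" using that by (auto simp: A_def)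
    then have "x0 \<noteq> 0" using \<open>w \<ge> 1\<close> by (auto simp: hweight_def)
    then have "x0 \<noteq> - x0" by (auto simp: vec_eq_iff F3_eq_neg_iff)
    have "(-1) *s x0 \<in> D" using D x0(1) by (simp add: linear_code_def)
    then have "- x0 \<in> D" unfolding vector_sneg_minus1[of x0] .
    moreover have "supp (- x0) = supp x0" by (auto simp: supp_def)
    ultimately have "{x\<in>A. supp x = supp x0} = {x0, - x0}"
      using ternary_min_weight_same_supp[OF D x0(1) _ \<open>x0 \<noteq> 0\<close>] min x0
      by (auto simp: A_def hweight_eq_card_supp)
    then show ?thesis using \<open>x0 \<noteq> - x0\<close> by simp
  qed
  have "card A = (\<Sum>S\<in>supp ` A. card {x\<in>A. supp x = S})"
    using sum.image_gen[of A "\<lambda>_. 1 :: nat" supp] by simp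
  also have "\<dots> = (\<Sum>S\<in>supp ` A. 2)"
    by (rule sum.cong) (auto simp: fiber)
  finally show ?thesis by (simp add: A_def)
qed

section \<open>Expected number of draws until the columns span\<close>

definition lists_with_set :: "'a set \<Rightarrow> nat \<Rightarrow> 'a list set" where
  "lists_with_set S t = {xs. length xs = t \<and> set xs = S}"

lemma finite_lists_with_set: "finite S \<Longrightarrow> finite (lists_with_set S t)"
  unfolding lists_with_set_def
  by (rule finite_subset[OF _ finite_lists_length_eq[of S t]]) auto

lemma card_lists_with_set_le: "finite S \<Longrightarrow> card (lists_with_set S t) \<le> card S ^ t"
proof -
  assume S: "finite S"
  have "card (lists_with_set S t) \<le> card {xs. set xs \<subseteq> S \<and> length xs = t}"
    unfolding lists_with_set_def by (rule card_mono) (auto intro: finite_lists_length_eq S)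
  also have "\<dots> = card S ^ t" by (rule card_lists_length_eq[OF S])
  finally show ?thesis .
qed

lemma lists_with_set_0: "lists_with_set S 0 = (if S = {} then {[]} else {})"
  by (auto simp: lists_with_set_def)

lemma card_lists_with_set_Suc:
  assumes S: "finite S"
  shows "card (lists_with_set S (Suc t)) =
           card S * card (lists_with_set S t) + (\<Sum>x\<in>S. card (lists_with_set (S - {x}) t))"
proof -
  define tails where "tails x = lists_with_set S t \<union> lists_with_set (S - {x}) t" for x
  have split: "lists_with_set S (Suc t) = (\<lambda>(x, ys). x # ys) ` Sigma S tails"
  proof (intro equalityI subsetI)
    fix xs assume "xs \<in> lists_with_set S (Suc t)"
    then obtain x ys where xs: "xs = x # ys" "length ys = t" "insert x (set ys) = S"
      by (cases xs) (auto simp: lists_with_set_def)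
    then have "ys \<in> tails x" by (auto simp: tails_def lists_with_set_def)
    with xs show "xs \<in> (\<lambda>(x, ys). x # ys) ` Sigma S tails" by force
  qed (auto simp: tails_def lists_with_set_def)
  have "inj_on (\<lambda>(x, ys). x # ys) (Sigma S tails)" by (rule inj_onI) auto
  then have "card (lists_with_set S (Suc t)) = (\<Sum>x\<in>S. card (tails x))"
    by (simp add: split card_image card_SigmaI S tails_def finite_lists_with_set)
  also have "\<dots> = (\<Sum>x\<in>S. card (lists_with_set S t) + card (lists_with_set (S - {x}) t))"
    unfolding tails_def
    by (intro sum.cong refl card_Un_disjoint finite_lists_with_set S finite_Diff)
       (auto simp: lists_with_set_def)
  finally show ?thesis by (simp add: sum.distrib)
qed

lemma summable_lists_with_set:
  assumes "finite S" "card S < N"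
  shows "summable (\<lambda>t. real (card (lists_with_set S t)) / real N ^ t)"
proof (rule summable_comparison_test'[where N = 0])
  show "summable (\<lambda>t. (real (card S) / real N) ^ t)"
    using assms by (intro summable_geometric) simp
  show "norm (real (card (lists_with_set S t)) / real N ^ t) \<le> (real (card S) / real N) ^ t" for t
  proof -
    have "real (card (lists_with_set S t)) \<le> real (card S) ^ t"
      using card_lists_with_set_le[OF assms(1), of t] by (simp flip: of_nat_power)
    then show ?thesis by (simp add: power_divide divide_right_mono)
  qed
qed

lemma lists_with_set_ratio_Suc:
  assumes "finite S"
  shows "real (card (lists_with_set S (Suc t))) / real N ^ Suc t =
    (real (card S) * (real (card (lists_with_set S t)) / real N ^ t) +
      (\<Sum>x\<in>S. real (card (lists_with_set (S - {x}) t)) / real N ^ t)) / real N"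
proof -
  have "real (card (lists_with_set S (Suc t))) = real (card S) * real (card (lists_with_set S t)) +
      (\<Sum>x\<in>S. real (card (lists_with_set (S - {x}) t)))"
    using card_lists_with_set_Suc[OF assms, of t] by simp
  then show ?thesis by (simp add: add_divide_distrib mult.commute flip: sum_divide_distrib)
qed

lemma Suc_times_binomial_eq_diff_times: "Suc k * (n choose Suc k) = (n - k) * (n choose k)"
  using binomial_absorption[of k n] binomial_absorb_comp[of n k] by simp

text \<open>The series is the expected number of times \<open>t\<close> at which the first \<open>t\<close> of a sequence of
  uniform draws from \<open>N\<close> letters use exactly the letters in \<open>S\<close>.\<close>
lemma lists_with_set_sums:
  assumes "finite S" "card S < N"
  shows "(\<lambda>t. real (card (lists_with_set S t)) / real N ^ t) sums (1 / real ((N - 1) choose card S))"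
  using assms
proof (induction "card S" arbitrary: S)
  case 0
  then have "(\<lambda>t. real (card (lists_with_set S t)) / real N ^ t) = (\<lambda>t. if t = 0 then 1 else 0)"
    by (auto simp: lists_with_set_def)
  then show ?case using sums_single[of 0 "\<lambda>_. 1::real"] 0(1)[symmetric] by simp
next
  case (Suc k)
  define r where "r t = real (card (lists_with_set S t)) / real N ^ t" for t
  obtain L where L: "r sums L"
    using summable_lists_with_set[OF Suc.prems] unfolding r_def summable_def by blast
  have "S \<noteq> {}" using Suc.hyps(2) by auto
  then have "r 0 = 0" by (simp add: r_def lists_with_set_0)
  then have "(\<lambda>t. r (Suc t)) sums L" using L by (simp add: sums_Suc_iff)
  moreover have "(\<lambda>t. r (Suc t)) sums ((real (Suc k) * L + (\<Sum>x\<in>S. 1 / real ((N - 1) choose k))) / real N)"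
  proof -
    have IH: "(\<lambda>t. real (card (lists_with_set (S - {x}) t)) / real N ^ t) sums (1 / real ((N - 1) choose k))"
      if "x \<in> S" for x
    proof -
      have "k = card (S - {x})" using Suc.hyps(2) Suc.prems(1) that by simp
      then show ?thesis using Suc.hyps(1)[of "S - {x}"] Suc.prems that by simp
    qed
    have "r (Suc t) = (real (Suc k) * r t + (\<Sum>x\<in>S. real (card (lists_with_set (S - {x}) t)) / real N ^ t)) / real N" for t
      using lists_with_set_ratio_Suc[OF Suc.prems(1)] Suc.hyps(2) by (simp add: r_def)
    then show ?thesis by (simp only:) (intro sums_divide sums_add sums_mult L sums_sum IH)
  qed
  ultimately have "L = (real (Suc k) * L + real (Suc k) / real ((N - 1) choose k)) / real N"
    using Suc.hyps(2) by (simp add: sums_unique2)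
  moreover have "(N - 1) choose k > 0" "N > 0" using Suc.prems Suc.hyps(2) by simp_all
  ultimately have "L * real (N - Suc k) * real ((N - 1) choose k) = real (Suc k)"
    using Suc.prems Suc.hyps(2) by (simp add: of_nat_diff field_simps)
  moreover have "Suc k * ((N - 1) choose Suc k) = (N - Suc k) * ((N - 1) choose k)"
    using Suc_times_binomial_eq_diff_times[of k "N - 1"] by simp
  ultimately have "real (Suc k) * (L * real ((N - 1) choose Suc k)) = real (Suc k) * 1"
    by (metis mult.commute mult.left_commute mult_1_right of_nat_mult)
  then have "L * real ((N - 1) choose Suc k) = 1"
    by (subst (asm) mult_cancel_left) simp
  then have "L = 1 / real ((N - 1) choose Suc k)"
    using Suc.prems Suc.hyps(2) by (simp add: eq_divide_eq)
  then show ?case using L Suc.hyps(2) by (simp add: r_def[abs_def])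
qed

text \<open>For letters drawn uniformly and independently from \<open>'a\<close> and a monotone property \<open>P\<close>
  of the set of letters drawn so far, let \<open>T\<close> be the first time at which \<open>P\<close> holds. Then
  \<open>hit_prob P t\<close> is \<open>P(T = t)\<close> and \<open>miss_prob P t\<close> is \<open>P(T > t)\<close>.\<close>
definition miss_prob :: "('a::finite set \<Rightarrow> bool) \<Rightarrow> nat \<Rightarrow> real" where
  "miss_prob P t = real (card {xs :: 'a list. length xs = t \<and> \<not> P (set xs)}) / real CARD('a) ^ t"

definition hit_prob :: "('a::finite set \<Rightarrow> bool) \<Rightarrow> nat \<Rightarrow> real" where
  "hit_prob P t =
     real (card {xs :: 'a list. length xs = t \<and> P (set xs) \<and> \<not> P (set (butlast xs))}) / real CARD('a) ^ t"

lemma hit_prob_0: "hit_prob P 0 = 0"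
  by (simp add: hit_prob_def)

lemma card_lists_butlast:
  "card {xs :: 'a::finite list. length xs = Suc t \<and> Q (butlast xs)} =
     CARD('a) * card {xs. length xs = t \<and> Q xs}"
proof -
  define A where "A = {xs :: 'a list. length xs = t \<and> Q xs}"
  have "{xs :: 'a list. length xs = Suc t \<and> Q (butlast xs)} = (\<lambda>(ys, y). ys @ [y]) ` (A \<times> UNIV)"
  proof (intro equalityI subsetI)
    fix xs :: "'a list" assume xs: "xs \<in> {xs. length xs = Suc t \<and> Q (butlast xs)}"
    then have "xs = butlast xs @ [last xs]" by (intro append_butlast_last_id[symmetric]) auto
    moreover have "(butlast xs, last xs) \<in> A \<times> UNIV" using xs by (simp add: A_def)
    ultimately show "xs \<in> (\<lambda>(ys, y). ys @ [y]) ` (A \<times> UNIV)" by force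
  qed (auto simp: A_def)
  moreover have "inj_on (\<lambda>(ys, y). ys @ [y]) (A \<times> (UNIV :: 'a set))" by (rule inj_onI) auto
  moreover have "finite A" unfolding A_def
    by (rule finite_subset[OF _ finite_lists_length_eq[of "UNIV :: 'a set" t]]) auto
  ultimately show ?thesis by (simp add: card_image card_cartesian_product A_def)
qed

lemma hit_prob_Suc:
  fixes P :: "'a::finite set \<Rightarrow> bool"
  assumes "mono P"
  shows "hit_prob P (Suc t) = miss_prob P t - miss_prob P (Suc t)"
proof -
  define X where "X = {xs :: 'a list. length xs = Suc t \<and> \<not> P (set (butlast xs))}"
  define Y where "Y = {xs :: 'a list. length xs = Suc t \<and> \<not> P (set xs)}"
  have "Y \<subseteq> X"
    using monoD[OF assms, of "set (butlast xs)" "set xs" for xs]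
    by (auto simp: X_def Y_def dest: in_set_butlastD)
  moreover have "finite X" unfolding X_def
    by (rule finite_subset[OF _ finite_lists_length_eq[of "UNIV :: 'a set" "Suc t"]]) auto
  ultimately have "card (X - Y) = card X - card Y" "card Y \<le> card X"
    by (auto intro: card_Diff_subset finite_subset card_mono)
  moreover have "{xs :: 'a list. length xs = Suc t \<and> P (set xs) \<and> \<not> P (set (butlast xs))} = X - Y"
    by (auto simp: X_def Y_def)
  moreover have "card X = CARD('a) * card {xs :: 'a list. length xs = t \<and> \<not> P (set xs)}"
    unfolding X_def by (rule card_lists_butlast)
  ultimately show ?thesis
    by (simp add: hit_prob_def miss_prob_def Y_def of_nat_diff field_simps)
qed

lemma miss_prob_eq_sum:
  fixes P :: "'a::finite set \<Rightarrow> bool"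
  shows "miss_prob P t = (\<Sum>S | \<not> P S. real (card (lists_with_set S t)) / real CARD('a) ^ t)"
proof -
  have "{xs :: 'a list. length xs = t \<and> \<not> P (set xs)} = (\<Union>S\<in>{S. \<not> P S}. lists_with_set S t)"
    by (auto simp: lists_with_set_def)
  moreover have "card (\<Union>S\<in>{S. \<not> P S}. lists_with_set S t) = (\<Sum>S | \<not> P S. card (lists_with_set S t))"
    by (intro card_UN_disjoint ballI finite_lists_with_set) (auto simp: lists_with_set_def)
  ultimately show ?thesis
    by (simp add: miss_prob_def sum_divide_distrib)
qed

lemma card_less_if_not_UNIV: "S \<noteq> UNIV \<Longrightarrow> card (S :: 'a::finite set) < CARD('a)"
  by (simp add: psubsetI psubset_card_mono)

lemma miss_prob_sums:
  fixes P :: "'a::finite set \<Rightarrow> bool"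
  assumes "P UNIV"
  shows "miss_prob P sums (\<Sum>S | \<not> P S. 1 / real ((CARD('a) - 1) choose card S))"
  unfolding miss_prob_eq_sum[abs_def]
  using assms by (intro sums_sum lists_with_set_sums card_less_if_not_UNIV) auto

lemma times_miss_prob_tendsto_0:
  fixes P :: "'a::finite set \<Rightarrow> bool"
  assumes "P UNIV"
  shows "(\<lambda>t. real t * miss_prob P t) \<longlonglongrightarrow> 0"
proof -
  define q where "q = real (CARD('a) - 1) / real CARD('a)"
  have lim: "(\<lambda>t. real t * q ^ t) \<longlonglongrightarrow> 0"
    by (rule powser_times_n_limit_0) (simp add: q_def)
  have bound: "norm (real t * (real (card (lists_with_set S t)) / real CARD('a) ^ t)) \<le> real t * q ^ t"
    if "\<not> P S" for S t
  proof -
    have "card S \<le> CARD('a) - 1" using card_less_if_not_UNIV[of S] that assms by fastforce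
    then have "card (lists_with_set S t) \<le> (CARD('a) - 1) ^ t"
      using card_lists_with_set_le[of S t] power_mono[of "card S" "CARD('a) - 1" t] by simp
    then have "real (card (lists_with_set S t)) \<le> real (CARD('a) - 1) ^ t"
      by (metis of_nat_le_iff of_nat_power)
    then show ?thesis
      by (simp add: q_def power_divide divide_right_mono mult_left_mono)
  qed
  show ?thesis
    unfolding miss_prob_eq_sum sum_distrib_left
    using Lim_null_comparison[OF always_eventually[OF allI[OF bound]] lim]
    by (intro tendsto_null_sum) simp
qed

text \<open>Summation by parts: \<open>\<Sum> t * P(T = t) = \<Sum> P(T > t)\<close>.\<close>
lemma sums_times_of_telescoping:
  fixes p q :: "nat \<Rightarrow> real"
  assumes "p 0 = 0" and "\<And>t. p (Suc t) = q t - q (Suc t)"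
    and "q sums s" and "(\<lambda>t. real t * q t) \<longlonglongrightarrow> 0"
  shows "(\<lambda>t. real t * p t) sums s"
proof -
  have partial: "(\<Sum>t<Suc n. real t * p t) = (\<Sum>t<n. q t) - real n * q n" for n
  proof (induction n)
    case 0
    then show ?case using assms(1) by simp
  next
    case (Suc n)
    then show ?case by (simp add: assms(2) algebra_simps)
  qed
  have "(\<lambda>n. (\<Sum>t<n. q t) - real n * q n) \<longlonglongrightarrow> s - 0"
    using assms(3,4) unfolding sums_def by (rule tendsto_diff)
  then have "(\<lambda>n. \<Sum>t<Suc n. real t * p t) \<longlonglongrightarrow> s"
    by (simp only: partial diff_zero)
  then show ?thesis
    unfolding sums_def by (rule LIMSEQ_imp_Suc)
qed

theorem hit_prob_expectation:
  fixes P :: "'a::finite set \<Rightarrow> bool"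
  assumes "mono P" and "P UNIV"
  shows "(\<lambda>t. real t * hit_prob P t) sums (\<Sum>S | \<not> P S. 1 / real ((CARD('a) - 1) choose card S))"
  by (rule sums_times_of_telescoping[OF hit_prob_0 hit_prob_Suc[OF assms(1)]
        miss_prob_sums[of P, OF assms(2)] times_miss_prob_tendsto_0[of P, OF assms(2)]])

lemma mono_cols_span_set: "mono (cols_span_set G)"
  unfolding mono_def cols_span_set_def le_bool_def by blast

lemma prob_T_eq_hit_prob: "prob_T G = hit_prob (cols_span_set G)"
  by (simp add: fun_eq_iff prob_T_def hit_prob_def cols_span_iff_set)

theorem expected_draws_eq_sum:
  fixes G :: "'a::comm_ring_1 ^ 'n ^ 'k"
  assumes "cols_span_set G UNIV"
  shows "expected_draws G = (\<Sum>S | \<not> cols_span_set G S. 1 / real ((CARD('n) - 1) choose card S))"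
  unfolding expected_draws_def prob_T_eq_hit_prob
  using hit_prob_expectation[OF mono_cols_span_set assms] by (rule sums_unique[symmetric])

lemma sum_card_le:
  "(\<Sum>S | card S \<le> m. f (card (S :: 'a::finite set))) = (\<Sum>s\<le>m. of_nat (CARD('a) choose s) * f s)"
proof -
  have "(\<Sum>S | card S \<le> m. f (card (S :: 'a set))) =
        (\<Sum>s\<le>m. \<Sum>S\<in>{S\<in>{S :: 'a set. card S \<le> m}. card S = s}. f (card S))"
    by (rule sum.group[symmetric]) auto
  also have "\<dots> = (\<Sum>s\<le>m. of_nat (CARD('a) choose s) * f s)"
  proof (rule sum.cong[OF refl])
    fix s assume "s \<in> {..m}"
    then have "{S\<in>{S :: 'a set. card S \<le> m}. card S = s} = {S. S \<subseteq> UNIV \<and> card S = s}" by auto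
    then show "(\<Sum>S\<in>{S\<in>{S :: 'a set. card S \<le> m}. card S = s}. f (card S)) = of_nat (CARD('a) choose s) * f s"
      using n_subsets[of "UNIV :: 'a set" s] by simp
  qed
  finally show ?thesis .
qed

lemma real_binomial_ratio:
  assumes "s < n"
  shows "real (n choose s) / real ((n - 1) choose s) = real n / real (n - s)"
proof -
  have "real (n choose s) * real (n - s) = real n * real ((n - 1) choose s)"
    using binomial_absorb_comp[of n s] by (metis mult.commute of_nat_mult)
  moreover have "(n - 1) choose s > 0" "n - s > 0" using assms by simp_all
  ultimately show ?thesis by (simp add: frac_eq_eq)
qed

lemma harm_diff_Suc: "k < n \<Longrightarrow> harm (n - k) - harm (n - Suc k) = (1 :: 'a::real_normed_field) / of_nat (n - k)"
  using harm_Suc[of "n - Suc k", where 'a = 'a] by (simp add: Suc_diff_Suc divide_inverse)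

lemma sum_binomial_ratio_eq_harm:
  assumes "m < n"
  shows "(\<Sum>s\<le>m. real (n choose s) / real ((n - 1) choose s)) = real n * (harm n - harm (n - Suc m))"
  using assms
proof (induction m)
  case 0
  then show ?case using harm_diff_Suc[of 0 n, where 'a = real] real_binomial_ratio[of 0 n] by simp
next
  case (Suc m)
  have "(\<Sum>s\<le>Suc m. real (n choose s) / real ((n - 1) choose s)) =
        real n * (harm n - harm (n - Suc m)) + real n / real (n - Suc m)"
    using Suc real_binomial_ratio[of "Suc m" n] by simp
  also have "\<dots> = real n * (harm n - harm (n - Suc (Suc m)))"
    using harm_diff_Suc[of "Suc m" n, where 'a = real] Suc.prems by (simp add: algebra_simps)
  finally show ?case .
qed

section \<open>Ternary codes with parameters [11, 6, 5]\<close>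

lemma card_Compl: "card (- S) = CARD('a) - card (S :: 'a::finite set)"
  by (simp add: Compl_eq_Diff_UNIV card_Diff_subset)

lemma exists_superset_card:
  fixes S :: "'a::finite set"
  assumes "card S \<le> n" "n \<le> CARD('a)"
  obtains T where "S \<subseteq> T" "card T = n"
proof -
  have "n - card S \<le> card (- S)" using assms by (simp add: card_Compl)
  then obtain R where R: "R \<subseteq> - S" "card R = n - card S" by (rule obtain_subset_with_card_n)
  then have "card (S \<union> R) = n" using assms(1) by (subst card_Un_disjoint) auto
  then show ?thesis using that by blast
qed

locale ternary_code_11_6_5 =
  fixes C :: "(3 ^ 11) set" and G :: "3 ^ 11 ^ 6"
  assumes linear: "linear_code C"
    and generator: "generator_matrix G C"
    and min_dist: "min_dist C = 5"
begin

lemma hweight_ge_5: "c \<in> C \<Longrightarrow> c \<noteq> 0 \<Longrightarrow> 5 \<le> hweight c"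
  using min_dist_le_hweight[OF linear] min_dist by simp

lemma hdist_ge_5: "c \<in> C \<Longrightarrow> c' \<in> C \<Longrightarrow> c \<noteq> c' \<Longrightarrow> 5 \<le> hdist c c'"
  using min_dist_le_hdist[of c C c'] min_dist by simp

lemma card_code: "card C = 729"
  using generator_matrix_codewords[OF generator] by (simp add: card_image)

lemma covering: "\<exists>c\<in>C. hdist v c \<le> 2"
proof (rule perfect_code_covers)
  have "(\<Sum>w\<le>2. (11 choose w) * 2 ^ w) = (243 :: nat)"
    by (simp add: numeral_eq_Suc)
  then show "card C * (\<Sum>w\<le>2. (CARD(11) choose w) * (CARD(3) - 1) ^ w) = CARD(3 ^ 11)"
    by (simp add: card_code)
qed (use hdist_ge_5 in force)

definition min_supports :: "11 set set" where
  "min_supports = supp ` {c\<in>C. hweight c = 5}"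

lemma card_min_support: "A \<in> min_supports \<Longrightarrow> card A = 5"
  by (auto simp: min_supports_def hweight_eq_card_supp)

text \<open>Every vector of weight 3 lies within distance 2 of exactly one codeword, which has
  weight 5; each codeword of weight 5 has \<open>5 choose 3\<close> such neighbours.\<close>
lemma card_hweight_5: "card {c\<in>C. hweight c = 5} = 132"
proof -
  define near where "near c = {v. hweight v = 3 \<and> hdist v c \<le> 2}" for c :: "3 ^ 11"
  have "{v :: 3 ^ 11. hweight v = 3} = (\<Union>c\<in>{c\<in>C. hweight c = 5}. near c)"
  proof (intro equalityI subsetI)
    fix v :: "3 ^ 11" assume v: "v \<in> {v. hweight v = 3}"
    obtain c where c: "c \<in> C" "hdist v c \<le> 2" using covering by blast
    then have "c \<noteq> 0" using v by (auto simp: hdist_zero_right)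
    moreover have "hweight c \<le> hdist c v + hweight v"
      using hdist_triangle[of c 0 v] by (simp add: hdist_zero_right hdist_commute[of v 0])
    ultimately have "hweight c = 5"
      using hweight_ge_5[OF c(1)] c(2) v by (simp add: hdist_commute)
    then show "v \<in> (\<Union>c\<in>{c\<in>C. hweight c = 5}. near c)"
      using c v by (auto simp: near_def)
  qed (auto simp: near_def)
  moreover have "near c \<inter> near c' = {}" if "c \<in> C" "c' \<in> C" "c \<noteq> c'" for c c'
  proof (rule ccontr)
    assume "near c \<inter> near c' \<noteq> {}"
    then obtain v where "hdist v c \<le> 2" "hdist v c' \<le> 2" by (auto simp: near_def)
    then have "hdist c c' \<le> 4" using hdist_triangle[of c c' v] hdist_commute[of c v] by simp
    then show False using hdist_ge_5[OF that] by simp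
  qed
  ultimately have "card {v :: 3 ^ 11. hweight v = 3} = (\<Sum>c\<in>{c\<in>C. hweight c = 5}. card (near c))"
    by (simp add: card_UN_disjoint)
  also have "\<dots> = (\<Sum>c\<in>{c\<in>C. hweight c = 5}. 5 choose 3)"
    using card_hweight_near[of _ 3 2] by (intro sum.cong) (auto simp: near_def)
  finally have "(11 choose 3) * 2 ^ 3 = card {c\<in>C. hweight c = 5} * (5 choose 3)"
    by (simp add: card_hweight_eq)
  moreover have "(11 choose 3) = (165 :: nat)" "(5 choose 3) = (10 :: nat)"
    by (simp_all add: numeral_eq_Suc)
  ultimately show ?thesis by simp
qed

lemma card_min_supports: "card min_supports = 66"
  using card_ternary_min_weight[OF linear, of 5] hweight_ge_5 card_hweight_5
  by (simp add: min_supports_def)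

lemma not_cols_span_set_iff_codeword: "\<not> cols_span_set G S \<longleftrightarrow> (\<exists>c\<in>C. c \<noteq> 0 \<and> supp c \<subseteq> - S)"
  unfolding cols_span_set_iff_codewords[OF generator] by blast

lemma not_cols_span_set_iff_card:
  "\<not> cols_span_set G S \<longleftrightarrow> card S \<le> 5 \<or> (card S = 6 \<and> - S \<in> min_supports)"
proof
  assume "\<not> cols_span_set G S"
  then obtain c where c: "c \<in> C" "c \<noteq> 0" "supp c \<subseteq> - S"
    unfolding not_cols_span_set_iff_codeword by blast
  have "5 \<le> card (supp c)" using hweight_ge_5[OF c(1,2)] by (simp add: hweight_eq_card_supp)
  moreover have "card (supp c) \<le> 11 - card S" using card_mono[OF _ c(3)] by (simp add: card_Compl)
  ultimately consider "card S \<le> 5" | "card S = 6" "card (supp c) = card (- S)"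
    by (force simp: card_Compl)
  then show "card S \<le> 5 \<or> (card S = 6 \<and> - S \<in> min_supports)"
  proof cases
    case 2
    then have "supp c = - S" using c(3) by (intro card_subset_eq) auto
    then show ?thesis using 2 c(1) by (auto simp: min_supports_def hweight_eq_card_supp card_Compl)
  qed simp
next
  assume "card S \<le> 5 \<or> (card S = 6 \<and> - S \<in> min_supports)"
  then show "\<not> cols_span_set G S"
  proof
    assume "card S \<le> 5"
    then show ?thesis using cols_span_set_card_ge[of G S] by auto
  next
    assume "card S = 6 \<and> - S \<in> min_supports"
    then obtain c where c: "c \<in> C" "hweight c = 5" "supp c = - S" by (auto simp: min_supports_def)
    then have "c \<noteq> 0" by (auto simp: hweight_def)
    with c show ?thesis unfolding not_cols_span_set_iff_codeword by blast
  qed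
qed

lemma not_cols_span_set_iff_dual:
  assumes "card S = 6"
  shows "\<not> cols_span_set G S \<longleftrightarrow> (\<exists>y\<in>dual_code C. y \<noteq> 0 \<and> supp y \<subseteq> S)"
  using cols_span_set_iff_kernel_trivial[of S G] assms by (auto simp: dual_code_iff_kernel[OF generator])

text \<open>On the four common positions \<open>c\<close> agrees with \<open>c'\<close> or with \<open>- c'\<close> at least twice,
  so \<open>c\<close> is within distance 4 of \<open>c'\<close> or of \<open>- c'\<close>.\<close>
lemma no_min_supports_in_common_6_set:
  assumes "c \<in> C" "c' \<in> C" and U: "card U = 6" "a \<in> U" "b \<in> U" "a \<noteq> b"
    and supp: "supp c = U - {a}" "supp c' = U - {b}"
  shows False
proof -
  define R where "R = U - {a, b}"
  define E where "E l = {i\<in>R. c $ i \<noteq> l * c' $ i}" for l :: 3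
  have "card R = 4" using U by (simp add: R_def card_Diff_subset)
  have nonzero: "c $ i \<noteq> 0" "c' $ i \<noteq> 0" if "i \<in> R" for i
    using that supp by (auto simp: R_def supp_def set_eq_iff)
  have "E 1 \<inter> E (-1) = {}"
    using F3_nonzero_eq_or_eq_neg[OF nonzero] by (auto simp: E_def)
  then have "card (E 1) + card (E (-1)) \<le> card R"
    by (simp add: card_Un_disjoint[symmetric] card_mono E_def)
  then have "card (E 1) \<le> 2 \<or> card (E (-1)) \<le> 2" using \<open>card R = 4\<close> by linarith
  then obtain l where l: "l = 1 \<or> l = -1" "card (E l) \<le> 2" by blast
  have "c $ i = 0 \<and> c' $ i = 0" if "i \<notin> U" for i
    using that supp unfolding supp_def by blast
  then have "hdist c (l *s c') \<le> card ({a, b} \<union> E l)"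
    unfolding hdist_def by (intro card_mono) (auto simp: E_def R_def, metis mult_zero_right)
  also have "\<dots> \<le> 4"
    using card_Un_le[of "{a, b}" "E l"] l(2) \<open>a \<noteq> b\<close> by simp
  finally have "hdist c (l *s c') \<le> 4" .
  moreover have "l *s c' \<in> C" using \<open>c' \<in> C\<close> linear by (simp add: linear_code_def)
  moreover have "c $ a = 0" "c' $ a \<noteq> 0"
    using supp U unfolding supp_def by blast+
  then have "c $ a \<noteq> (l *s c') $ a" using l(1) by auto
  then have "c \<noteq> l *s c'" by metis
  ultimately show False using hdist_ge_5[OF \<open>c \<in> C\<close>] by fastforce
qed

text \<open>Enlarge \<open>supp y\<close> to a 5-set \<open>T\<close>: each 6-set \<open>insert e T\<close> carries \<open>y\<close>, so it does not
  span, so \<open>- T - {e}\<close> supports a codeword of weight 5; two such supports are impossible.\<close>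
lemma dual_hweight_ge_6:
  assumes y: "y \<in> dual_code C" "y \<noteq> 0"
  shows "6 \<le> hweight y"
proof (rule ccontr)
  assume "\<not> 6 \<le> hweight y"
  then obtain T where T: "supp y \<subseteq> T" "card T = 5"
    using exists_superset_card[of "supp y" 5] by (force simp: hweight_eq_card_supp)
  have complement: "- T - {e} \<in> min_supports" if "e \<in> - T" for e
  proof -
    have "card (insert e T) = 6" using that T(2) by simp
    moreover have "\<not> cols_span_set G (insert e T)"
      using not_cols_span_set_iff_dual[OF \<open>card (insert e T) = 6\<close>] y T(1) by blast
    ultimately have "- insert e T \<in> min_supports" using not_cols_span_set_iff_card by simp
    then show ?thesis by (simp add: Compl_insert)
  qed
  have "card (- T) = 6" using T(2) by (simp add: card_Compl)
  then have "- T \<noteq> {}" by auto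
  then obtain a where "a \<in> - T" by blast
  then have "card (- T - {a}) = 5" using \<open>card (- T) = 6\<close> by simp
  then have "- T - {a} \<noteq> {}" by (metis card.empty zero_neq_numeral)
  then obtain b where "b \<in> - T - {a}" by blast
  then have ab: "a \<in> - T" "b \<in> - T" "a \<noteq> b" using \<open>a \<in> - T\<close> by auto
  obtain c c' where "c \<in> C" "supp c = - T - {a}" "c' \<in> C" "supp c' = - T - {b}"
    using complement[OF ab(1)] complement[OF ab(2)] by (auto simp: min_supports_def)
  then show False
    using no_min_supports_in_common_6_set \<open>card (- T) = 6\<close> ab by blast
qed

lemma supports_dual_hweight_6: "supp ` {y\<in>dual_code C. hweight y = 6} = uminus ` min_supports"
proof (intro equalityI subsetI)
  fix S assume "S \<in> supp ` {y\<in>dual_code C. hweight y = 6}"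
  then obtain y where y: "y \<in> dual_code C" "hweight y = 6" "S = supp y" by blast
  then have "card S = 6" "y \<noteq> 0" by (auto simp: hweight_eq_card_supp supp_def)
  then have "\<not> cols_span_set G S" using not_cols_span_set_iff_dual y by blast
  then have "- S \<in> min_supports" using not_cols_span_set_iff_card \<open>card S = 6\<close> by simp
  then show "S \<in> uminus ` min_supports" by (rule rev_image_eqI) simp
next
  fix S assume "S \<in> uminus ` min_supports"
  then obtain A where "A \<in> min_supports" "S = - A" by blast
  then have "card S = 6" "- S \<in> min_supports" by (simp_all add: card_Compl card_min_support)
  then have "\<not> cols_span_set G S" using not_cols_span_set_iff_card by simp
  then obtain y where y: "y \<in> dual_code C" "y \<noteq> 0" "supp y \<subseteq> S"
    using not_cols_span_set_iff_dual[OF \<open>card S = 6\<close>] by blast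
  then have "card S \<le> card (supp y)"
    using dual_hweight_ge_6 \<open>card S = 6\<close> by (simp add: hweight_eq_card_supp)
  then have "supp y = S" using y(3) by (intro card_seteq) auto
  then show "S \<in> supp ` {y\<in>dual_code C. hweight y = 6}"
    using y(1) \<open>card S = 6\<close> by (auto simp: hweight_eq_card_supp)
qed

lemma W_6_dual: "W 6 (dual_code C) = 132"
proof -
  have "W 6 (dual_code C) = 2 * card (supp ` {y\<in>dual_code C. hweight y = 6})"
    unfolding W_def by (rule card_ternary_min_weight[OF linear_code_dual]) (auto intro: dual_hweight_ge_6)
  also have "\<dots> = 2 * card min_supports"
    unfolding supports_dual_hweight_6 by (simp add: card_image inj_on_def)
  finally show ?thesis by (simp add: card_min_supports)
qed

lemma cols_span_set_UNIV: "cols_span_set G UNIV"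
  using not_cols_span_set_iff_card[of UNIV] by auto

lemma non_spanning_sets: "{S. \<not> cols_span_set G S} = {S. card S \<le> 5} \<union> uminus ` min_supports"
proof (intro equalityI subsetI)
  fix S assume "S \<in> {S. \<not> cols_span_set G S}"
  then show "S \<in> {S. card S \<le> 5} \<union> uminus ` min_supports"
    using not_cols_span_set_iff_card[of S] by (metis UnI1 UnI2 double_complement image_eqI mem_Collect_eq)
next
  fix S assume "S \<in> {S. card S \<le> 5} \<union> uminus ` min_supports"
  then show "S \<in> {S. \<not> cols_span_set G S}"
    using not_cols_span_set_iff_card[of S] by (auto simp: card_Compl card_min_support)
qed

lemma expected_draws_value: "expected_draws G = 11 * (harm 11 - harm 5) + 66 / real (10 choose 6)"
proof -
  have B: "card S = 6" if "S \<in> uminus ` min_supports" for S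
    using that by (auto simp: card_Compl card_min_support)
  then have "{S. card (S :: 11 set) \<le> 5} \<inter> uminus ` min_supports = {}" by force
  then have "expected_draws G = (\<Sum>S | card (S :: 11 set) \<le> 5. 1 / real (10 choose card S)) +
      (\<Sum>S\<in>uminus ` min_supports. 1 / real (10 choose card S))"
    unfolding expected_draws_eq_sum[OF cols_span_set_UNIV] non_spanning_sets
    by (simp add: sum.union_disjoint)
  also have "(\<Sum>S\<in>uminus ` min_supports. 1 / real (10 choose card S)) = 66 / real (10 choose 6)"
    using B card_min_supports by (simp add: card_image inj_on_def)
  finally show ?thesis
    using sum_card_le[where 'a = 11 and m = 5 and f = "\<lambda>s. 1 / real (10 choose s)"]
      sum_binomial_ratio_eq_harm[of 5 11] by simp
qed

end

theorem mainTheorem8: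
  fixes C :: "(3 ^ 11) set" and G :: "3 ^ 11 ^ 6"
  assumes "linear_code C"
    and "generator_matrix G C"
    and "min_dist C = 5"
  shows "expected_draws G =
           11 * (harm 11 - harm (5 - 1))
           - (real (11 choose 6) - real (W 6 (dual_code C)) / 2) / real ((11 - 1) choose 6)
         \<and> W 6 (dual_code C) = 132
         \<and> \<bar>expected_draws G - 8.416\<bar> < 0.0005"
proof -
  interpret ternary_code_11_6_5 C G using assms by unfold_locales
  have "real (11 choose 6) / real (10 choose 6) = 11 / 5"
    using real_binomial_ratio[of 6 11] by simp
  moreover have "(10 choose 6) = (210 :: nat)" by (simp add: numeral_eq_Suc)
  ultimately show ?thesis
    using expected_draws_value W_6_dual by (simp add: diff_divide_distrib harm_expand)
qed

end
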